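(* Let $C\subset\mathbb{R}^p$ be a closed convex pointed cone containing $0$ with nonempty interior such that $P\subset\mathrm{int}(C)\cup\{0\}$. If $K\in\mathcal{K}(C,P)$, then $\mathcal{E}(K,P)=\mathcal{PE}(K,P)$.
   Context: $P\subset\mathbb{R}^p$ is a closed convex pointed cone containing $0$ with nonempty interior. For nonempty $S\subset\mathbb{R}^p$ and such a cone $Q$, $\mathcal{E}(S,Q)=\{y\in S:(y-Q)\cap S=\{y\}\}$. Contingent cone of $S$ at $y\in S$: $T_S(y)=\{v:\exists h_k\to0^+,\exists v_k\to v,y+h_kv_k\in S\}$. Properly minimal elements: $\mathcal{PE}(S,P)=\{y\in\mathcal{E}(S,P): T_{S+P}(y)\cap(-P)=\{0\}\}$. $\mathcal{K}(C,P)$ is the set of nonempty compact $K\subset\mathbb{R}^p$ with $\mathcal{E}(K,P)=\mathcal{E}(K,C)$. *)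

theory Defs
  imports "HOL-Analysis.Analysis"
begin

definition ordering_cone :: "'a::euclidean_space set \<Rightarrow> bool" where
  "ordering_cone Q \<longleftrightarrow> closed Q \<and> convex Q \<and> cone Q \<and> 0 \<in> Q \<and>
     Q \<inter> uminus ` Q = {0} \<and> interior Q \<noteq> {}"

definition minimal_elems :: "'a::euclidean_space set \<Rightarrow> 'a set \<Rightarrow> 'a set" where
  "minimal_elems S Q = {y \<in> S. ((\<lambda>q. y - q) ` Q) \<inter> S = {y}}"

definition contingent_cone :: "'a::euclidean_space set \<Rightarrow> 'a \<Rightarrow> 'a set" where
  "contingent_cone S y = {v. \<exists>h :: nat \<Rightarrow> real. \<exists>w :: nat \<Rightarrow> 'a.
      (\<forall>k. h k > 0) \<and> h \<longlonglongrightarrow> 0 \<and> w \<longlonglongrightarrow> v \<and> (\<forall>k. y + h k *\<^sub>R w k \<in> S)}"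

text \<open>Properly minimal elements (Henig/Borwein-type via contingent cone of S + P).\<close>
definition properly_minimal_elems :: "'a::euclidean_space set \<Rightarrow> 'a set \<Rightarrow> 'a set" where
  "properly_minimal_elems S P = {y \<in> minimal_elems S P.
      contingent_cone (S + P) y \<inter> uminus ` P = {0}}"

definition K_class :: "'a::euclidean_space set \<Rightarrow> 'a set \<Rightarrow> 'a set set" where
  "K_class C P = {K. K \<noteq> {} \<and> compact K \<and> minimal_elems K P = minimal_elems K C}"

end

theory Submission
  imports Defs
begin

(* Let y be P-minimal in K.  Since K is in K(C,P), y is also
   C-minimal.  Take a tangent direction v of K + P at y with -v in P.  If
   v were nonzero, -v would lie in the interior of C, so along any sequence
   y + h_k w_k in K + P with w_k -> v we eventually have -w_k in C.  Writing
   y + h_k w_k = a + b with a in K, b in P gives y - a = h_k(-w_k) + b in C,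
   hence a = y by C-minimality; then h_k w_k = b lies in C as well, and
   pointedness of C forces w_k = 0.  So v = lim w_k = 0.
   The file first records the elementary facts (minimality, the zero tangent
   vector, the one-step argument above), then the tangent-cone statement for
   an arbitrary convex pointed cone C dominating P, and finally derives the
   proposition. *)

lemma minimal_elem_unique_below:
  assumes "y \<in> minimal_elems S Q" and "z \<in> S" and "y - z \<in> Q"
  shows "z = y"
proof -
  have "z \<in> ((\<lambda>q. y - q) ` Q) \<inter> S"
    using assms(2,3) by (force intro: image_eqI[of _ _ "y - z"])
  then show ?thesis
    using assms(1) unfolding minimal_elems_def by auto
qed

lemma zero_in_contingent_cone:
  assumes "y \<in> S"
  shows "0 \<in> contingent_cone S y"
  unfolding contingent_cone_def
proof (intro CollectI exI conjI allI)
  show "(\<lambda>k. 1 / (real k + 1)) \<longlonglongrightarrow> 0"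
    using LIMSEQ_inverse_real_of_nat by (simp add: inverse_eq_divide add.commute)
  show "(\<lambda>k. 0) \<longlonglongrightarrow> 0" by simp
  fix k
  show "(0::real) < 1 / (real k + 1)" by simp
  show "y + (1 / (real k + 1)) *\<^sub>R 0 \<in> S" using assms by simp
qed

lemma minimal_no_step_against_cone:
  assumes cone: "convex C" "cone C" "C \<inter> uminus ` C = {0}"
    and PC: "P \<subseteq> C"
    and y: "y \<in> minimal_elems K C"
    and h: "h > 0" and w: "- w \<in> C"
    and step: "y + h *\<^sub>R w \<in> K + P"
  shows "w = 0"
proof -
  have add: "\<And>x z. x \<in> C \<Longrightarrow> z \<in> C \<Longrightarrow> x + z \<in> C"
    and scale: "\<And>x c. x \<in> C \<Longrightarrow> c \<ge> 0 \<Longrightarrow> c *\<^sub>R x \<in> C"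
    using convex_cone[of C] cone(1,2) by auto
  obtain a b where a: "a \<in> K" and b: "b \<in> P" and ab: "y + h *\<^sub>R w = a + b"
    using step by (meson set_plus_elim)
  have "y - a = h *\<^sub>R (- w) + b"
    using ab by (simp add: algebra_simps)
  moreover have "h *\<^sub>R (- w) \<in> C" using scale[OF w] h by simp
  ultimately have "y - a \<in> C"
    using add[of "h *\<^sub>R (- w)" b] b PC by (auto simp: add.commute)
  then have "a = y" using minimal_elem_unique_below y a by blast
  then have hw: "h *\<^sub>R w = b" using ab by simp
  have "w = (1 / h) *\<^sub>R b" using h by (simp add: hw[symmetric])
  then have "w \<in> C" using scale[of b "1 / h"] PC b h by auto
  moreover have "w \<in> uminus ` C" using w by (metis image_eqI minus_minus)
  ultimately show "w = 0" using cone(3) by blast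
qed

lemma contingent_cone_avoids_neg_interior:
  assumes cone: "convex C" "cone C" "C \<inter> uminus ` C = {0}"
    and PC: "P \<subseteq> C"
    and y: "y \<in> minimal_elems K C"
    and v: "v \<in> contingent_cone (K + P) y" and int: "- v \<in> interior C"
  shows "v = 0"
proof -
  obtain h w where h: "\<forall>k. h k > 0" and wv: "w \<longlonglongrightarrow> v"
    and steps: "\<forall>k. y + h k *\<^sub>R w k \<in> K + P"
    using v unfolding contingent_cone_def by blast
  have "(\<lambda>k. - w k) \<longlonglongrightarrow> - v" using wv by (rule tendsto_minus)
  then have "\<forall>\<^sub>F k in sequentially. - w k \<in> interior C"
    using int by (rule topological_tendstoD[OF _ open_interior])
  then have "\<forall>\<^sub>F k in sequentially. w k = 0"
    by (rule eventually_mono)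
       (use minimal_no_step_against_cone[OF cone PC y] h steps interior_subset in blast)
  then have "w \<longlonglongrightarrow> 0" by (simp add: tendsto_eventually)
  then show "v = 0" using wv LIMSEQ_unique by blast
qed

theorem proposition4p14:
  fixes C P :: "(real ^ 'p) set" and K :: "(real ^ 'p) set"
  assumes "ordering_cone P"
    and "ordering_cone C"
    and "P \<subseteq> interior C \<union> {0}"
    and "K \<in> K_class C P"
  shows "minimal_elems K P = properly_minimal_elems K P"
proof
  show "properly_minimal_elems K P \<subseteq> minimal_elems K P"
    unfolding properly_minimal_elems_def by auto
next
  have cone: "convex C" "cone C" "C \<inter> uminus ` C = {0}" and P0: "0 \<in> P"
    using assms(1,2) unfolding ordering_cone_def by auto
  have PC: "P \<subseteq> C"
    using assms(2,3) interior_subset unfolding ordering_cone_def by auto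
  have EKC: "minimal_elems K P = minimal_elems K C"
    using assms(4) unfolding K_class_def by auto
  show "minimal_elems K P \<subseteq> properly_minimal_elems K P"
  proof
    fix y assume yP: "y \<in> minimal_elems K P"
    have "y \<in> K" using yP unfolding minimal_elems_def by auto
    then have "0 \<in> contingent_cone (K + P) y"
      using P0 by (intro zero_in_contingent_cone) (force intro: set_plus_intro[of y K 0 P, simplified])
    moreover have "v = 0" if "v \<in> contingent_cone (K + P) y" "- v \<in> P" for v
      using contingent_cone_avoids_neg_interior[OF cone PC _ that(1)] yP EKC that(2) assms(3)
      by (cases "v = 0") auto
    ultimately have "contingent_cone (K + P) y \<inter> uminus ` P = {0}"
      using P0 by (force intro: image_eqI[of _ _ "- _"])
    then show "y \<in> properly_minimal_elems K P"
      using yP unfolding properly_minimal_elems_def by auto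
  qed
qed

end
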